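(* Let $C_n=\frac1{n+1}\binom{2n}n$ be the $n$-th Catalan number. Then, as Laurent series in $z$, $$\sum_{n\ge0}C_nz^n=-13z^{-1}-3\left(4+2z^{-1}\right)\Psi(-z)+\left(-8z-14+4z^{-1}\right)\Psi^3(-z)+3\left(z^2-6z+9-4z^{-1}\right)\Psi^5(-z)\quad\text{modulo }27.$$
   Context: $\Psi(z)=\prod_{j\ge0}(1+z^{3^j})$, so $\Psi(-z)=\prod_{j\ge0}(1-z^{3^j})$. "Modulo $27$" means coefficientwise congruence of Laurent series in $z$. *)

theory Defs
  imports "HOL-Computational_Algebra.Computational_Algebra" "HOL-Number_Theory.Cong"
begin

text \<open>Psi(-z) = prod_{j>=0} (1 - z^(3^j)) as an integer power series. The coefficient of
  z^n of the infinite product equals that of the finite product over j < n+1, since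
  every factor with 3^j > n is 1 modulo z^(n+1).\<close>
definition Psi_neg :: "int fps" where
  "Psi_neg = Abs_fps (\<lambda>n. fps_nth (\<Prod>j<Suc n. (1 - fps_X ^ (3 ^ j))) n)"

definition catalan :: "nat \<Rightarrow> int" where
  "catalan n = int ((2 * n choose n) div (n + 1))"

definition catalan_gf :: "int fls" where
  "catalan_gf = fps_to_fls (Abs_fps catalan)"

end

theory Submission
  imports Defs
begin

text \<open>Write \<open>P = \<Psi>(-z)\<close>. Cubing is additive modulo 3, so \<open>P(z)\<^sup>3 \<equiv> P(z\<^sup>3)\<close>, while
  \<open>P(z) = (1 - z) P(z\<^sup>3)\<close>; cancelling \<open>P\<close> gives \<open>(1 - z) P\<^sup>2 \<equiv> 1 (mod 3)\<close>.
  Let \<open>Q\<close> be \<open>z\<close> times the right-hand side, a polynomial in \<open>z\<close> and \<open>P\<close>. Substituting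
  \<open>(1 - z) P\<^sup>2 = 1 + 3t\<close> and expanding shows \<open>Q\<^sup>2 - Q + z \<equiv> 0 (mod 27)\<close>. The series
  \<open>W = z \<Sum> C\<^sub>n z\<^sup>n\<close> satisfies \<open>W\<^sup>2 - W + z = 0\<close>, so \<open>(W - Q)(1 - W - Q) \<equiv> 0\<close>, and the
  second factor is congruent to a unit; hence \<open>W \<equiv> Q (mod 27)\<close>.\<close>

lemma fps_dvd_mult_unit_cancel:
  fixes f g :: "'a::comm_ring_1 fps"
  assumes "m dvd f * g" and "g $ 0 dvd 1"
  shows "m dvd f"
proof -
  obtain y where "g $ 0 * y = 1" using assms(2) by auto
  then have "g * fps_right_inverse g y = 1" by (rule fps_right_inverse)
  then have "f = f * g * fps_right_inverse g y" by (simp add: mult.assoc)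
  with assms(1) show ?thesis by (metis dvd_mult2)
qed

lemma fps_const_dvd_iff:
  fixes f :: "'a::comm_semiring_1 fps"
  shows "fps_const c dvd f \<longleftrightarrow> (\<forall>n. c dvd f $ n)"
proof
  assume "fps_const c dvd f"
  then show "\<forall>n. c dvd f $ n" by (auto elim!: dvdE)
next
  assume "\<forall>n. c dvd f $ n"
  then have "\<forall>n. \<exists>d. f $ n = c * d" by auto
  then obtain d where "\<And>n. f $ n = c * d n" by metis
  then have "f = fps_const c * Abs_fps d" by (simp add: fps_eq_iff)
  then show "fps_const c dvd f" by (rule dvdI)
qed

lemma fps_X_power_dvd_iff:
  fixes f :: "'a::comm_semiring_1 fps"
  shows "fps_X ^ k dvd f \<longleftrightarrow> (\<forall>n<k. f $ n = 0)"
proof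
  assume "fps_X ^ k dvd f"
  then show "\<forall>n<k. f $ n = 0" by (auto elim!: dvdE simp: fps_X_power_mult_nth)
next
  assume "\<forall>n<k. f $ n = 0"
  then have "f = fps_X ^ k * Abs_fps (\<lambda>n. f $ (n + k))"
    by (auto simp: fps_eq_iff fps_X_power_mult_nth not_less)
  then show "fps_X ^ k dvd f" by (rule dvdI)
qed

lemma dvd_prod_diff:
  fixes f g :: "'b \<Rightarrow> 'a::comm_ring_1"
  assumes "\<And>j. j \<in> J \<Longrightarrow> m dvd f j - g j"
  shows "m dvd prod f J - prod g J"
  using assms
proof (induction J rule: infinite_finite_induct)
  case (insert j J)
  have "prod f (insert j J) - prod g (insert j J) = (f j - g j) * prod f J + g j * (prod f J - prod g J)"
    using insert.hyps by (simp add: algebra_simps)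
  then show ?case using insert by simp
qed simp_all

definition Psi_neg_prod :: "nat \<Rightarrow> int fps" where
  "Psi_neg_prod N = (\<Prod>j<N. 1 - fps_X ^ 3 ^ j)"

lemma Psi_neg_prod_nth_0: "Psi_neg_prod N $ 0 = 1"
  by (induction N) (simp_all add: Psi_neg_prod_def)

lemma Psi_neg_prod_Suc: "Psi_neg_prod (Suc N) = Psi_neg_prod N * (1 - fps_X ^ 3 ^ N)"
  by (simp add: Psi_neg_prod_def)

lemma Psi_neg_prod_Suc_shift: "Psi_neg_prod (Suc N) = (1 - fps_X) * (\<Prod>j<N. 1 - fps_X ^ 3 ^ Suc j)"
  unfolding Psi_neg_prod_def prod.lessThan_Suc_shift by simp

lemma Psi_neg_prod_cube_cong: "3 dvd Psi_neg_prod N ^ 3 - (\<Prod>j<N. 1 - fps_X ^ 3 ^ Suc j)"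
  unfolding Psi_neg_prod_def prod_power_distrib
proof (rule dvd_prod_diff)
  fix j
  have "(fps_X ^ 3 ^ j) ^ 3 = (fps_X ^ 3 ^ Suc j :: int fps)"
    by (simp add: power_mult[symmetric] mult.commute)
  moreover have "(1 - y) ^ 3 - (1 - y ^ 3) = 3 * (y ^ 2 - y)" for y :: "int fps"
    by algebra
  ultimately show "3 dvd (1 - fps_X ^ 3 ^ j) ^ 3 - (1 - fps_X ^ 3 ^ Suc j :: int fps)"
    by (metis dvdI)
qed

lemma Psi_neg_prod_square_cong: "3 dvd (1 - fps_X) * Psi_neg_prod N ^ 2 - 1 + fps_X ^ 3 ^ N"
proof -
  define P where "P = Psi_neg_prod N"
  define T where "T = (\<Prod>j<N. 1 - fps_X ^ 3 ^ Suc j :: int fps)"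
  define x where "x = (fps_X ^ 3 ^ N :: int fps)"
  have "P * (1 - x) = (1 - fps_X) * T"
    using Psi_neg_prod_Suc_shift[of N] unfolding Psi_neg_prod_Suc P_def T_def x_def .
  then have "((1 - fps_X) * P ^ 2 - 1 + x) * P = (1 - fps_X) * (P ^ 3 - T)"
    by algebra
  then have "3 dvd ((1 - fps_X) * P ^ 2 - 1 + x) * P"
    using Psi_neg_prod_cube_cong[of N] unfolding P_def T_def by simp
  then show ?thesis
    unfolding P_def x_def
    by (rule fps_dvd_mult_unit_cancel) (simp add: Psi_neg_prod_nth_0)
qed

lemma Psi_neg_prod_cong_X_power:
  assumes "N \<le> M"
  shows "fps_X ^ 3 ^ N dvd Psi_neg_prod M - Psi_neg_prod N"
proof -
  define R where "R = (\<Prod>j\<in>{N..<M}. 1 - fps_X ^ 3 ^ j :: int fps)"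
  have "Psi_neg_prod M - Psi_neg_prod N = Psi_neg_prod N * (R - 1)"
    unfolding Psi_neg_prod_def R_def using prod.atLeastLessThan_concat[of 0 N M, symmetric] assms
    by (simp add: atLeast0LessThan right_diff_distrib)
  moreover have "fps_X ^ 3 ^ N dvd R - (\<Prod>j\<in>{N..<M}. 1)"
    unfolding R_def
  proof (rule dvd_prod_diff)
    fix j assume "j \<in> {N..<M}"
    have minus: "(1 - fps_X ^ 3 ^ j) - 1 = - (fps_X ^ 3 ^ j :: int fps)" by simp
    show "fps_X ^ 3 ^ N dvd (1 - fps_X ^ 3 ^ j) - (1 :: int fps)"
      unfolding minus dvd_minus_iff using \<open>j \<in> {N..<M}\<close> by (simp add: le_imp_power_dvd)
  qed
  ultimately show ?thesis by simp
qed

lemma less_three_power_Suc: "k < 3 ^ Suc k" for k :: nat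
  by (induction k) simp_all

lemma Psi_neg_cong_X_power: "fps_X ^ 3 ^ N dvd Psi_neg - Psi_neg_prod N"
  unfolding fps_X_power_dvd_iff
proof (intro allI impI)
  fix k :: nat assume k: "k < 3 ^ N"
  have "Psi_neg_prod (Suc k) $ k = Psi_neg_prod N $ k"
  proof (cases "N \<le> Suc k")
    case True
    with k show ?thesis
      using Psi_neg_prod_cong_X_power[of N "Suc k"] by (simp add: fps_X_power_dvd_iff)
  next
    case False
    then show ?thesis
      using Psi_neg_prod_cong_X_power[of "Suc k" N] less_three_power_Suc[of k]
      by (simp add: fps_X_power_dvd_iff)
  qed
  then show "(Psi_neg - Psi_neg_prod N) $ k = 0"
    by (simp add: Psi_neg_def Psi_neg_prod_def)
qed

lemma Psi_neg_square_cong: "3 dvd (1 - fps_X) * Psi_neg ^ 2 - 1"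
  unfolding fps_numeral_fps_const fps_const_dvd_iff
proof
  fix k
  define P where "P = Psi_neg_prod (Suc k)"
  define D where "D = (1 - fps_X) * (Psi_neg - P) * (Psi_neg + P) - fps_X ^ 3 ^ Suc k"
  have "fps_X ^ 3 ^ Suc k dvd D"
    unfolding D_def P_def using Psi_neg_cong_X_power[of "Suc k"] by simp
  then have D_nth: "D $ k = 0"
    using less_three_power_Suc[of k] by (simp add: fps_X_power_dvd_iff)
  have decomp: "(1 - fps_X) * Psi_neg ^ 2 - 1 = ((1 - fps_X) * P ^ 2 - 1 + fps_X ^ 3 ^ Suc k) + D"
    unfolding D_def by algebra
  have "3 dvd ((1 - fps_X) * P ^ 2 - 1 + fps_X ^ 3 ^ Suc k) $ k"
    using Psi_neg_prod_square_cong[of "Suc k"]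
    unfolding P_def fps_numeral_fps_const fps_const_dvd_iff by blast
  then show "3 dvd ((1 - fps_X) * Psi_neg ^ 2 - 1) $ k"
    unfolding decomp fps_add_nth D_nth by simp
qed

text \<open>\<open>catalan_approx z \<Psi>(-z)\<close> is \<open>z\<close> times the right-hand side of the theorem.\<close>

definition catalan_approx :: "'a::comm_ring_1 \<Rightarrow> 'a \<Rightarrow> 'a" where
  "catalan_approx z p = - 13 - 3 * (4 * z + 2) * p + (- 8 * z^2 - 14 * z + 4) * p^3
     + 3 * (z^3 - 6 * z^2 + 9 * z - 4) * p^5"

text \<open>After multiplying by \<open>(1 - z)\<^sup>5\<close>, \<open>p\<close> survives only in a multiple of 27 and in
  \<open>(1 - z) p\<^sup>2 = 1 + 3t\<close>; what remains is a polynomial identity in \<open>z\<close> and \<open>t\<close>.\<close>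

lemma catalan_approx_quadratic_dvd:
  fixes z p t :: "'a::idom"
  assumes u: "(1 - z) * p^2 = 1 + 3 * t"
  shows "27 dvd (1 - z)^5 * (catalan_approx z p ^ 2 - catalan_approx z p + z)"
proof -
  define h where "h = - 3 * (4 * z + 2) + (- 8 * z^2 - 14 * z + 4) * p^2
    + 3 * (z^3 - 6 * z^2 + 9 * z - 4) * p^4"
  define K where "K = - 3 * (4 * z + 2) * (1 - z)^2 + (- 8 * z^2 - 14 * z + 4) * (1 - z) * (1 + 3 * t)
    + 3 * (z^3 - 6 * z^2 + 9 * z - 4) * (1 + 3 * t)^2"
  have Q: "catalan_approx z p = - 13 + p * h"
    unfolding catalan_approx_def h_def by algebra
  have "(1 - z)^2 * h = - 3 * (4 * z + 2) * (1 - z)^2 + (- 8 * z^2 - 14 * z + 4) * (1 - z) * ((1 - z) * p^2)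
      + 3 * (z^3 - 6 * z^2 + 9 * z - 4) * ((1 - z) * p^2)^2"
    unfolding h_def by algebra
  then have K: "(1 - z)^2 * h = K"
    unfolding u K_def .
  have "(1 - z)^5 * (catalan_approx z p ^ 2 - catalan_approx z p + z)
      = 27 * ((1 - z)^5 * (7 - p * h)) + ((1 - z) * p^2) * ((1 - z)^2 * h)^2 + (z - 7) * (1 - z)^5"
    unfolding Q by algebra
  also have "\<dots> = 27 * ((1 - z)^5 * (7 - p * h)) + ((1 + 3 * t) * K^2 + (z - 7) * (1 - z)^5)"
    unfolding u K by (simp only: add.assoc)
  also have "(1 + 3 * t) * K^2 + (z - 7) * (1 - z)^5 = 27 * (7 + 84 * t + 432 * t^2 + 1216 * t^3 + 1872 * t^4 + 1296 * t^5 - 8 * z - 180 * z * t - 1260 * z * t^2 - 4356 * z * t^3 - 7776 * z * t^4 - 5832 * z * t^5 - 6 * z^2 + 129 * z^2 * t + 1530 * z^2 * t^2 + 6726 * z^2 * t^3 + 13635 * z^2 * t^4 + 10449 * z^2 * t^5 + 8 * z^3 - 36 * z^3 * t - 1080 * z^3 * t^2 - 6152 * z^3 * t^3 - 13248 * z^3 * t^4 - 9396 * z^3 * t^5 - 1 * z^4 - 18 * z^4 * t + 504 * z^4 * t^2 + 3744 * z^4 * t^3 + 7614 * z^4 * t^4 + 4374 * z^4 * t^5 + 24 * z^5 * t - 180 * z^5 * t^2 - 1452 * z^5 * t^3 - 2376 * z^5 * t^4 - 972 * z^5 * t^5 - 3 * z^6 * t + 54 * z^6 * t^2 + 274 * z^6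 * t^3 + 279 * z^6 * t^4 + 81 * z^6 * t^5)"
    unfolding K_def by algebra
  finally show ?thesis
    by (metis dvd_add dvd_triv_left)
qed

lemma gbinomial_minus_half:
  "(- (1/2) :: 'a::field_char_0) gchoose n = (- 1/4) ^ n * of_nat (2 * n choose n)"
proof -
  have "fact (2 * n) = (2 ^ (2 * n) * pochhammer (1/2) n * fact n :: 'a)"
    using pochhammer_double[of "1/2 :: 'a" n] by (simp add: pochhammer_fact)
  then have "(of_nat (2 * n choose n) :: 'a) = 2 ^ (2 * n) * pochhammer (1/2) n / fact n"
    by (simp add: binomial_fact)
  moreover have "(- 1/4 :: 'a) ^ n * 2 ^ (2 * n) = (- 1) ^ n"
    by (simp add: power_mult flip: power_mult_distrib)
  ultimately show ?thesis
    by (simp add: gbinomial_pochhammer mult.assoc[symmetric])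
qed

lemma Suc_times_catalan: "int (Suc n) * catalan n = int (2 * n choose n)"
proof -
  define R where "R = (2 * n choose n) - (2 * n choose Suc n)"
  have "n * (2 * n choose n) = Suc n * (2 * n choose Suc n)"
    using binomial_absorb_comp[of "2 * n" n] binomial_absorption[of n "2 * n"] by simp
  then have central: "2 * n choose n = Suc n * R"
    unfolding R_def by (simp add: diff_mult_distrib2)
  then have "catalan n = int R"
    unfolding catalan_def central by (simp only: Suc_eq_plus1 nonzero_mult_div_cancel_left add_eq_0_iff_both_eq_0 one_neq_zero simp_thms)
  then show ?thesis
    unfolding central by (simp add: algebra_simps)
qed

lemma gbinomial_half_Suc:
  "(- 4) ^ Suc n * ((1/2 :: 'a::field_char_0) gchoose Suc n) = - 2 * of_int (catalan n)"
proof -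
  have central: "of_nat (2 * n choose n) = (of_nat (Suc n) * of_int (catalan n) :: 'a)"
    by (metis Suc_times_catalan of_int_mult of_int_of_nat_eq)
  have "of_nat (Suc n) * ((1/2 :: 'a) gchoose Suc n) = 1/2 * (- 1/4) ^ n * of_nat (2 * n choose n)"
    using gbinomial_absorption[of n "1/2 :: 'a"] by (simp add: gbinomial_minus_half)
  also have "\<dots> = of_nat (Suc n) * (1/2 * (- 1/4) ^ n * of_int (catalan n))"
    unfolding central by (simp only: ac_simps)
  finally have half: "((1/2 :: 'a) gchoose Suc n) = 1/2 * (- 1/4) ^ n * of_int (catalan n)"
    by (simp only: mult_left_cancel of_nat_eq_0_iff nat.distinct(2) simp_thms)
  have "(- 4 :: 'a) ^ n * (- 1/4) ^ n = 1"
    by (simp flip: power_mult_distrib)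
  then have "(- 4 :: 'a) ^ Suc n * (1/2 * (- 1/4) ^ n) = - 2"
    by simp
  then show ?thesis
    unfolding half by (simp only: mult.assoc[symmetric])
qed

lemma catalan_sqrt_fps:
  "fps_binomial (1/2) oo (fps_const (- 4) * fps_X)
     = 1 - 2 * (fps_X * Abs_fps (\<lambda>n. of_int (catalan n) :: 'a::field_char_0))"
proof (rule fps_ext)
  fix n
  show "(fps_binomial (1/2) oo (fps_const (- 4) * fps_X)) $ n
      = (1 - 2 * (fps_X * Abs_fps (\<lambda>n. of_int (catalan n) :: 'a))) $ n"
  proof (cases n)
    case (Suc m)
    then show ?thesis
      using gbinomial_half_Suc[of m] by (simp add: fps_compose_linear fps_numeral_fps_const)
  qed (simp add: fps_compose_linear)
qed

lemma fps_binomial_half_compose_square: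
  "(fps_binomial (1/2) oo (fps_const (- 4) * fps_X)) ^ 2 = (1 - 4 * fps_X :: 'a::field_char_0 fps)"
proof -
  have "fps_binomial (1/2 :: 'a) ^ 2 = 1 + fps_X"
    by (simp add: fps_binomial_power fps_binomial_1)
  then have "(fps_binomial (1/2) oo (fps_const (- 4) * fps_X)) ^ 2 = (1 + fps_X) oo (fps_const (- 4 :: 'a) * fps_X)"
    by (simp add: fps_compose_power)
  also have "\<dots> = 1 - 4 * fps_X"
    by (simp add: fps_compose_add_distrib fps_numeral_fps_const)
  finally show ?thesis .
qed

lemma catalan_Suc: "catalan (Suc n) = (\<Sum>i\<le>n. catalan i * catalan (n - i))"
proof -
  define C where "C = Abs_fps (\<lambda>n. of_int (catalan n) :: real)"
  have "(1 - 2 * (fps_X * C)) ^ 2 = 1 - 4 * fps_X"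
    using fps_binomial_half_compose_square catalan_sqrt_fps unfolding C_def by metis
  then have "(4 * fps_X) * (C - 1 - fps_X * C ^ 2) = 0"
    by algebra
  moreover have "4 * fps_X \<noteq> (0 :: real fps)"
    by (simp add: fps_numeral_fps_const)
  ultimately have "C - 1 - fps_X * C ^ 2 = 0"
    by (simp only: mult_eq_0_iff simp_thms)
  then have "C = 1 + fps_X * C ^ 2"
    by (simp add: algebra_simps)
  then have "C $ Suc n = (1 + fps_X * C ^ 2) $ Suc n"
    by (rule arg_cong)
  also have "\<dots> = (C * C) $ n"
    by (simp add: power2_eq_square)
  finally have "real_of_int (catalan (Suc n)) = real_of_int (\<Sum>i\<le>n. catalan i * catalan (n - i))"
    by (simp add: C_def fps_mult_nth atLeast0AtMost)
  then show ?thesis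
    by (simp only: of_int_eq_iff)
qed

lemma catalan_fps_quadratic:
  "(fps_X * Abs_fps catalan) ^ 2 - fps_X * Abs_fps catalan + fps_X = 0"
proof -
  have "Abs_fps catalan = 1 + fps_X * Abs_fps catalan ^ 2"
  proof (rule fps_ext)
    fix n show "Abs_fps catalan $ n = (1 + fps_X * Abs_fps catalan ^ 2) $ n"
    proof (cases n)
      case 0
      then show ?thesis by (simp add: catalan_def)
    next
      case (Suc m)
      then show ?thesis
        by (simp add: power2_eq_square) (simp add: catalan_Suc fps_mult_nth atLeast0AtMost)
    qed
  qed
  then show ?thesis
    by algebra
qed

lemma catalan_approx_Psi_neg_quadratic_dvd:
  "27 dvd catalan_approx fps_X Psi_neg ^ 2 - catalan_approx fps_X Psi_neg + fps_X"
proof -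
  obtain t where "(1 - fps_X) * Psi_neg ^ 2 - 1 = 3 * t"
    using Psi_neg_square_cong by (elim dvdE)
  then have "(1 - fps_X) * Psi_neg ^ 2 = 1 + 3 * t"
    by (simp add: algebra_simps)
  then have "27 dvd (catalan_approx fps_X Psi_neg ^ 2 - catalan_approx fps_X Psi_neg + fps_X) * (1 - fps_X) ^ 5"
    using catalan_approx_quadratic_dvd by (metis mult.commute)
  then show ?thesis
    by (rule fps_dvd_mult_unit_cancel) (simp add: fps_power_zeroth)
qed

lemma catalan_approx_Psi_neg_nth_0: "catalan_approx fps_X Psi_neg $ 0 = - 27"
  by (simp add: catalan_approx_def Psi_neg_def fps_power_zeroth)

lemma catalan_fps_cong_approx: "27 dvd fps_X * Abs_fps catalan - catalan_approx fps_X Psi_neg"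
proof -
  define W where "W = fps_X * Abs_fps catalan"
  define Q where "Q = catalan_approx fps_X (Psi_neg :: int fps)"
  \<comment> \<open>Subtracting 27 makes the second factor a unit: its constant term is 1.\<close>
  have "(W - Q) * (1 - W - Q - 27) = (Q ^ 2 - Q + fps_X) - (W ^ 2 - W + fps_X) - 27 * (W - Q)"
    by algebra
  also have "\<dots> = (Q ^ 2 - Q + fps_X) - 27 * (W - Q)"
    using catalan_fps_quadratic unfolding W_def by simp
  finally have "27 dvd (W - Q) * (1 - W - Q - 27)"
    using catalan_approx_Psi_neg_quadratic_dvd unfolding Q_def by (metis dvd_diff dvd_triv_left)
  then have "27 dvd W - Q"
    by (rule fps_dvd_mult_unit_cancel) (simp add: W_def Q_def catalan_approx_Psi_neg_nth_0)
  then show ?thesis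
    unfolding W_def Q_def .
qed

lemma catalan_approx_fls:
  "- 13 * fls_X_inv - 3 * (4 + 2 * fls_X_inv) * fps_to_fls p
     + (- 8 * fls_X - 14 + 4 * fls_X_inv) * fps_to_fls p ^ 3
     + 3 * (fls_X ^ 2 - 6 * fls_X + 9 - 4 * fls_X_inv) * fps_to_fls p ^ 5
   = fls_X_inv * fps_to_fls (catalan_approx fps_X (p :: int fps))"
proof -
  have "fls_X_inv * fls_X = (1 :: int fls)"
    by (simp add: fls_X_inv_times_conv_shift)
  moreover have "fps_to_fls (catalan_approx fps_X p) = - 13 - 3 * (4 * fls_X + 2) * fps_to_fls p
      + (- 8 * fls_X ^ 2 - 14 * fls_X + 4) * fps_to_fls p ^ 3
      + 3 * (fls_X ^ 3 - 6 * fls_X ^ 2 + 9 * fls_X - 4) * fps_to_fls p ^ 5"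
    by (simp add: catalan_approx_def fls_times_fps_to_fls fps_to_fls_power)
  ultimately show ?thesis
    by algebra
qed

lemma catalan_gf_conv_fps: "catalan_gf = fls_X_inv * fps_to_fls (fps_X * Abs_fps catalan)"
proof -
  have "fls_X_inv * fls_X = (1 :: int fls)"
    by (simp add: fls_X_inv_times_conv_shift)
  then show ?thesis
    by (simp add: catalan_gf_def fls_times_fps_to_fls mult.assoc[symmetric])
qed

theorem theorem13p2:
  "\<forall>n::int. [fls_nth catalan_gf n =
     fls_nth (- 13 * fls_X_inv
        - 3 * (4 + 2 * fls_X_inv) * fps_to_fls Psi_neg
        + (- 8 * fls_X - 14 + 4 * fls_X_inv) * (fps_to_fls Psi_neg) ^ 3
        + 3 * (fls_X ^ 2 - 6 * fls_X + 9 - 4 * fls_X_inv) * (fps_to_fls Psi_neg) ^ 5) n] (mod 27)"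
  unfolding catalan_gf_conv_fps catalan_approx_fls cong_iff_dvd_diff
proof
  fix n :: int
  define D where "D = fps_X * Abs_fps catalan - catalan_approx fps_X Psi_neg"
  have "fls_nth (fls_X_inv * fps_to_fls (fps_X * Abs_fps catalan)) n
      - fls_nth (fls_X_inv * fps_to_fls (catalan_approx fps_X Psi_neg)) n
      = fls_nth (fls_X_inv * fps_to_fls D) n"
    unfolding D_def fps_to_fls_minus right_diff_distrib fls_minus_nth ..
  also have "\<dots> = (if n + 1 < 0 then 0 else D $ nat (n + 1))"
    by (simp add: fls_X_inv_times_conv_shift)
  finally show "27 dvd fls_nth (fls_X_inv * fps_to_fls (fps_X * Abs_fps catalan)) n
      - fls_nth (fls_X_inv * fps_to_fls (catalan_approx fps_X Psi_neg)) n"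
    using catalan_fps_cong_approx unfolding D_def[symmetric] fps_numeral_fps_const fps_const_dvd_iff
    by simp
qed

end
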